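(* Let $\Gamma$ be a finite connected $(G,2)$-geodesic-transitive graph of girth at least $4$, with $G\le\mathrm{Aut}(\Gamma)$. Let $N$ be an intransitive normal subgroup of $G$ with at least $3$ orbits on $V(\Gamma)$. Then $\Gamma_N$ is a complete graph if and only if $\Gamma_N$ has girth $3$.
   Context: A $2$-geodesic is a path $(v_0,v_1,v_2)$ with $d(v_0,v_2)=2$; $\Gamma$ is $(G,2)$-geodesic-transitive if it has a $2$-geodesic and $G$ is transitive on vertices, on arcs and on $2$-geodesics. $\Gamma_N$ is the graph whose vertices are the $N$-orbits on $V(\Gamma)$, two distinct orbits being adjacent iff some edge of $\Gamma$ joins them. *)

theory Defs
  imports "HOL-Algebra.Algebra" "HOL-Library.Extended_Nat"
begin

definition simple_graph :: "'v set \<Rightarrow> ('v \<Rightarrow> 'v \<Rightarrow> bool) \<Rightarrow> bool" where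
  "simple_graph V E \<longleftrightarrow> (\<forall>x y. E x y \<longrightarrow> x \<in> V \<and> y \<in> V \<and> x \<noteq> y \<and> E y x)"

definition is_walk :: "('v \<Rightarrow> 'v \<Rightarrow> bool) \<Rightarrow> 'v list \<Rightarrow> bool" where
  "is_walk E xs \<longleftrightarrow> xs \<noteq> [] \<and> (\<forall>i. Suc i < length xs \<longrightarrow> E (xs ! i) (xs ! Suc i))"

definition connected_graph :: "'v set \<Rightarrow> ('v \<Rightarrow> 'v \<Rightarrow> bool) \<Rightarrow> bool" where
  "connected_graph V E \<longleftrightarrow>
     (\<forall>u\<in>V. \<forall>w\<in>V. \<exists>xs. is_walk E xs \<and> hd xs = u \<and> last xs = w)"

definition gdist :: "('v \<Rightarrow> 'v \<Rightarrow> bool) \<Rightarrow> 'v \<Rightarrow> 'v \<Rightarrow> nat" where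
  "gdist E u w = (LEAST n. \<exists>xs. is_walk E xs \<and> hd xs = u \<and> last xs = w \<and> length xs = Suc n)"

definition two_geodesic :: "('v \<Rightarrow> 'v \<Rightarrow> bool) \<Rightarrow> 'v \<Rightarrow> 'v \<Rightarrow> 'v \<Rightarrow> bool" where
  "two_geodesic E u v w \<longleftrightarrow> E u v \<and> E v w \<and> gdist E u w = 2"

definition is_cycle :: "('v \<Rightarrow> 'v \<Rightarrow> bool) \<Rightarrow> 'v list \<Rightarrow> bool" where
  "is_cycle E xs \<longleftrightarrow> length xs \<ge> 3 \<and> distinct xs \<and> is_walk E xs \<and> E (last xs) (hd xs)"

definition girth :: "('v \<Rightarrow> 'v \<Rightarrow> bool) \<Rightarrow> enat" where
  "girth E = Inf {enat (length xs) | xs. is_cycle E xs}"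

definition aut_group :: "'v set \<Rightarrow> ('v \<Rightarrow> 'v \<Rightarrow> bool) \<Rightarrow> ('v \<Rightarrow> 'v) set \<Rightarrow> bool" where
  "aut_group V E G \<longleftrightarrow> subgroup G (BijGroup V) \<and>
     (\<forall>g\<in>G. \<forall>x\<in>V. \<forall>y\<in>V. E x y \<longleftrightarrow> E (g x) (g y))"

definition two_geodesic_transitive ::
  "'v set \<Rightarrow> ('v \<Rightarrow> 'v \<Rightarrow> bool) \<Rightarrow> ('v \<Rightarrow> 'v) set \<Rightarrow> bool" where
  "two_geodesic_transitive V E G \<longleftrightarrow>
     (\<exists>u v w. two_geodesic E u v w) \<and>
     (\<forall>u\<in>V. \<forall>u'\<in>V. \<exists>g\<in>G. g u = u') \<and>
     (\<forall>u v u' v'. E u v \<longrightarrow> E u' v' \<longrightarrow> (\<exists>g\<in>G. g u = u' \<and> g v = v')) \<and>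
     (\<forall>u v w u' v' w'. two_geodesic E u v w \<longrightarrow> two_geodesic E u' v' w' \<longrightarrow>
        (\<exists>g\<in>G. g u = u' \<and> g v = v' \<and> g w = w'))"

definition orbit :: "('v \<Rightarrow> 'v) set \<Rightarrow> 'v \<Rightarrow> 'v set" where
  "orbit N x = (\<lambda>g. g x) ` N"

definition quot_vertices :: "'v set \<Rightarrow> ('v \<Rightarrow> 'v) set \<Rightarrow> 'v set set" where
  "quot_vertices V N = orbit N ` V"

definition quot_adj :: "'v set \<Rightarrow> ('v \<Rightarrow> 'v \<Rightarrow> bool) \<Rightarrow> ('v \<Rightarrow> 'v) set \<Rightarrow> 'v set \<Rightarrow> 'v set \<Rightarrow> bool" where
  "quot_adj V E N B C \<longleftrightarrow> B \<in> quot_vertices V N \<and> C \<in> quot_vertices V N \<and> B \<noteq> C \<and>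
     (\<exists>x\<in>B. \<exists>y\<in>C. E x y)"

definition complete_graph :: "'w set \<Rightarrow> ('w \<Rightarrow> 'w \<Rightarrow> bool) \<Rightarrow> bool" where
  "complete_graph W F \<longleftrightarrow> (\<forall>x\<in>W. \<forall>y\<in>W. x \<noteq> y \<longrightarrow> F x y)"

end

theory Submission
  imports Defs
begin

(* No edge of the graph lies inside an N-orbit: by arc-transitivity and normality of N every
   edge would then do so, and connectivity would make N transitive.  Since the girth is at least 4,
   every path (x, y, z) with x \<noteq> z is a 2-geodesic, so each 2-path U ~ Y ~ W of the quotient with
   U \<noteq> W lifts to a 2-geodesic.  If the quotient has a triangle, lifting two of its sides gives a
   2-geodesic whose end orbits are adjacent, and 2-geodesic-transitivity moves it onto any other
   lifted 2-geodesic: every 2-path of the quotient closes to a triangle, and connectivity makes the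
   quotient complete. *)

lemma is_walk_singleton [simp]: "is_walk E [a]"
  by (simp add: is_walk_def)

lemma is_walk_Cons_Cons [simp]: "is_walk E (a # b # xs) \<longleftrightarrow> E a b \<and> is_walk E (b # xs)"
  by (auto simp: is_walk_def nth_Cons less_Suc_eq_0_disj split: nat.splits)

lemma is_walk_Nil [simp]: "\<not> is_walk E []"
  by (simp add: is_walk_def)

lemma is_walk_length_le_2:
  "is_walk E xs \<Longrightarrow> length xs \<le> 2 \<Longrightarrow> hd xs = last xs \<or> E (hd xs) (last xs)"
  by (cases xs rule: remdups_adj.cases) auto

lemma is_walk_rtranclp: "is_walk E xs \<Longrightarrow> E\<^sup>*\<^sup>* (hd xs) (last xs)"
proof (induction xs)
  case (Cons a xs)
  then show ?case
    by (cases xs) (auto intro: converse_rtranclp_into_rtranclp)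
qed simp

lemma connected_graph_rtranclp:
  "connected_graph V E \<Longrightarrow> u \<in> V \<Longrightarrow> w \<in> V \<Longrightarrow> E\<^sup>*\<^sup>* u w"
  unfolding connected_graph_def by (metis is_walk_rtranclp)

lemma is_cycle_triangle_iff [simp]:
  "is_cycle E [a, b, c] \<longleftrightarrow> distinct [a, b, c] \<and> E a b \<and> E b c \<and> E c a"
  by (auto simp: is_cycle_def)

lemma girth_ge_3: "3 \<le> girth E"
  unfolding girth_def is_cycle_def by (auto intro!: Inf_greatest simp: numeral_eq_enat)

lemma girth_less_4_iff_triangle: "girth E < 4 \<longleftrightarrow> (\<exists>a b c. is_cycle E [a, b, c])"
proof
  assume "girth E < 4"
  then obtain xs where "is_cycle E xs" "length xs < 4"
    unfolding girth_def Inf_less_iff by (auto simp: numeral_eq_enat)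
  then have "length xs = 3" "is_cycle E xs" by (auto simp: is_cycle_def)
  then show "\<exists>a b c. is_cycle E [a, b, c]"
    by (metis length_0_conv length_Suc_conv numeral_3_eq_3)
next
  assume "\<exists>a b c. is_cycle E [a, b, c]"
  then obtain xs where "is_cycle E xs" "length xs = 3" by fastforce
  then have "girth E \<le> 3"
    unfolding girth_def by (metis (mono_tags, lifting) Inf_lower mem_Collect_eq numeral_eq_enat)
  also have "(3::enat) < 4" by (simp add: numeral_eq_enat)
  finally show "girth E < 4" .
qed

lemma girth_eq_3_iff_triangle: "girth E = 3 \<longleftrightarrow> (\<exists>a b c. is_cycle E [a, b, c])"
  using girth_ge_3[of E] girth_less_4_iff_triangle[of E]
  by (cases "girth E") (auto simp: numeral_eq_enat)

lemma simple_graph_sym: "simple_graph V E \<Longrightarrow> E x y \<Longrightarrow> E y x"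
  unfolding simple_graph_def by blast

lemma simple_graph_irrefl: "simple_graph V E \<Longrightarrow> E x y \<Longrightarrow> x \<noteq> y"
  unfolding simple_graph_def by blast

lemma simple_graph_edge_in: "simple_graph V E \<Longrightarrow> E x y \<Longrightarrow> x \<in> V \<and> y \<in> V"
  unfolding simple_graph_def by blast

lemma gdist_eq_2:
  assumes "E x y" "E y z" "x \<noteq> z" "\<not> E x z"
  shows "gdist E x z = 2"
  unfolding gdist_def
proof (rule Least_equality)
  show "\<exists>xs. is_walk E xs \<and> hd xs = x \<and> last xs = z \<and> length xs = Suc 2"
    by (rule exI[of _ "[x, y, z]"]) (simp add: assms(1,2))
next
  fix m assume "\<exists>xs. is_walk E xs \<and> hd xs = x \<and> last xs = z \<and> length xs = Suc m"
  then obtain xs where walk: "is_walk E xs" "hd xs = x" "last xs = z" "length xs = Suc m"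
    by blast
  show "2 \<le> m"
  proof (rule ccontr)
    assume "\<not> 2 \<le> m"
    then have "length xs \<le> 2"
      using walk(4) by linarith
    then have "x = z \<or> E x z"
      using is_walk_length_le_2[OF walk(1)] walk(2,3) by simp
    then show False
      using assms(3,4) by blast
  qed
qed

lemma two_geodesic_if_girth_ge_4:
  assumes "simple_graph V E" "4 \<le> girth E" "E x y" "E y z" "x \<noteq> z"
  shows "two_geodesic E x y z"
proof -
  have "\<not> girth E < 4"
    using assms(2) by (simp add: not_less)
  then have "\<not> is_cycle E [x, y, z]"
    using girth_less_4_iff_triangle by blast
  moreover have "x \<noteq> y" "y \<noteq> z"
    using simple_graph_irrefl[OF assms(1)] assms(3,4) by blast+
  ultimately have "\<not> E z x"
    using assms(3-5) by simp
  then have "\<not> E x z"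
    using simple_graph_sym[OF assms(1), of x z] by blast
  then show ?thesis
    unfolding two_geodesic_def using gdist_eq_2[OF assms(3-5)] assms(3,4) by blast
qed

lemma complete_graph_girth_eq_3:
  assumes "complete_graph W F" "3 \<le> card W"
  shows "girth F = 3"
proof -
  obtain T where "T \<subseteq> W" "card T = 3"
    using obtain_subset_with_card_n[OF assms(2)] by blast
  then obtain a b c where abc: "a \<in> W" "b \<in> W" "c \<in> W" "distinct [a, b, c]"
    using card_3_iff[of T] by auto
  then have "F a b" "F b c" "F c a"
    using assms(1) unfolding complete_graph_def by auto
  then have "is_cycle F [a, b, c]"
    using abc(4) by simp
  then show ?thesis
    using girth_eq_3_iff_triangle by blast
qed

definition arc_transitive :: "('v \<Rightarrow> 'v \<Rightarrow> bool) \<Rightarrow> ('v \<Rightarrow> 'v) set \<Rightarrow> bool" where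
  "arc_transitive E G \<longleftrightarrow> (\<forall>u v u' v'. E u v \<longrightarrow> E u' v' \<longrightarrow> (\<exists>g\<in>G. g u = u' \<and> g v = v'))"

lemma two_geodesic_transitive_imp_arc_transitive:
  "two_geodesic_transitive V E G \<Longrightarrow> arc_transitive E G"
  unfolding two_geodesic_transitive_def arc_transitive_def by blast

lemma group_action_subgroup_BijGroup:
  assumes "subgroup K (BijGroup V)"
  shows "group_action ((BijGroup V)\<lparr>carrier := K\<rparr>) V (\<lambda>g. g)"
proof -
  have "(\<lambda>g. g) \<in> hom ((BijGroup V)\<lparr>carrier := K\<rparr>) (BijGroup V)"
    using subgroup.subset[OF assms] unfolding hom_def by auto
  then show ?thesis
    using subgroup.subgroup_is_group[OF assms group_BijGroup] group_BijGroup
    unfolding group_action_def group_hom_def group_hom_axioms_def by blast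
qed

locale perm_normal_subgroup =
  fixes V :: "'v set" and G N :: "('v \<Rightarrow> 'v) set"
  assumes perm_group: "subgroup G (BijGroup V)"
    and normal: "N \<lhd> (BijGroup V)\<lparr>carrier := G\<rparr>"
begin

lemma normal_subset: "N \<subseteq> G"
  using subgroup.subset[OF normal_imp_subgroup[OF normal]] by simp

lemma perm_subgroup: "subgroup N (BijGroup V)"
  using group.incl_subgroup[OF group_BijGroup perm_group normal_imp_subgroup[OF normal]] .

sublocale G: group_action "(BijGroup V)\<lparr>carrier := G\<rparr>" V "\<lambda>g. g"
  using group_action_subgroup_BijGroup[OF perm_group] .

sublocale N: group_action "(BijGroup V)\<lparr>carrier := N\<rparr>" V "\<lambda>g. g"
  using group_action_subgroup_BijGroup[OF perm_subgroup] .

lemma orbit_eq_action_orbit: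
  "orbit N x = Group_Action.orbit ((BijGroup V)\<lparr>carrier := N\<rparr>) (\<lambda>g. g) x"
  by (auto simp: orbit_def Group_Action.orbit_def)

lemma orbit_refl: "x \<in> V \<Longrightarrow> x \<in> orbit N x"
  using N.orbit_refl by (simp add: orbit_eq_action_orbit)

lemma orbit_subset: "x \<in> V \<Longrightarrow> orbit N x \<subseteq> V"
  using N.element_image by (auto simp: orbit_def)

lemma orbit_eq:
  assumes "x \<in> V" "y \<in> orbit N x"
  shows "orbit N y = orbit N x"
proof -
  have y: "y \<in> V"
    using assms orbit_subset by blast
  have x: "x \<in> orbit N y"
    using N.orbit_sym[OF assms(1) y] assms(2) by (simp add: orbit_eq_action_orbit)
  show ?thesis
  proof
    show "orbit N y \<subseteq> orbit N x"
      using N.orbit_trans[OF assms(1) y] assms(2) orbit_subset[OF y]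
      unfolding orbit_eq_action_orbit by blast
    show "orbit N x \<subseteq> orbit N y"
      using N.orbit_trans[OF y assms(1)] x orbit_subset[OF assms(1)]
      unfolding orbit_eq_action_orbit by blast
  qed
qed

lemma quot_vertex_eq_orbit: "B \<in> quot_vertices V N \<Longrightarrow> y \<in> B \<Longrightarrow> B = orbit N y"
  unfolding quot_vertices_def using orbit_eq by blast

lemma orbit_image:
  assumes g: "g \<in> G" and x: "x \<in> V" and y: "y \<in> orbit N x"
  shows "g y \<in> orbit N (g x)"
proof -
  let ?H = "(BijGroup V)\<lparr>carrier := G\<rparr>"
  obtain n where n: "n \<in> N" "y = n x"
    using y unfolding orbit_def by blast
  have g': "g \<in> carrier ?H" and n': "n \<in> carrier ?H"
    using g n(1) normal_subset by auto
  have grp: "group ?H"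
    using subgroup.subgroup_is_group[OF perm_group group_BijGroup] .
  have conj: "g \<otimes>\<^bsub>?H\<^esub> n \<otimes>\<^bsub>?H\<^esub> inv\<^bsub>?H\<^esub> g \<in> N"
    using normal.inv_op_closed2[OF normal g' n(1)] .
  have "(g \<otimes>\<^bsub>?H\<^esub> n \<otimes>\<^bsub>?H\<^esub> inv\<^bsub>?H\<^esub> g) (g x)
      = (g \<otimes>\<^bsub>?H\<^esub> n) ((inv\<^bsub>?H\<^esub> g) (g x))"
    using G.composition_rule[OF G.element_image[OF g' x refl]] monoid.m_closed[OF group.is_monoid[OF grp] g' n']
      group.inv_closed[OF grp g'] by blast
  also have "\<dots> = g y"
    using G.orbit_sym_aux[OF g' x refl] G.composition_rule[OF x g' n'] n(2) by simp
  finally show ?thesis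
    using conj unfolding orbit_def by (metis image_eqI)
qed

lemma orbit_image_eq_iff:
  assumes g: "g \<in> G" and x: "x \<in> V" and y: "y \<in> V"
  shows "orbit N (g x) = orbit N (g y) \<longleftrightarrow> orbit N x = orbit N y"
proof
  assume "orbit N x = orbit N y"
  then have "g y \<in> orbit N (g x)"
    using orbit_image[OF g x] orbit_refl[OF y] by simp
  then show "orbit N (g x) = orbit N (g y)"
    using orbit_eq G.element_image[OF _ x refl] g by force
next
  let ?H = "(BijGroup V)\<lparr>carrier := G\<rparr>"
  have g': "g \<in> carrier ?H" and g_inv: "inv\<^bsub>?H\<^esub> g \<in> G"
    using g group.inv_closed[OF subgroup.subgroup_is_group[OF perm_group group_BijGroup]] by auto
  assume "orbit N (g x) = orbit N (g y)"
  then have "g y \<in> orbit N (g x)"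
    using orbit_refl G.element_image[OF g' y refl] by simp
  then have "y \<in> orbit N x"
    using orbit_image[OF g_inv G.element_image[OF g' x refl]]
      G.orbit_sym_aux[OF g' x refl] G.orbit_sym_aux[OF g' y refl] by metis
  then show "orbit N x = orbit N y"
    using orbit_eq[OF x] by simp
qed

end

locale normal_quotient_graph = perm_normal_subgroup V G N for V :: "'v set" and G N +
  fixes E :: "'v \<Rightarrow> 'v \<Rightarrow> bool"
  assumes simple: "simple_graph V E"
    and edge_preserving: "\<forall>g\<in>G. \<forall>x\<in>V. \<forall>y\<in>V. E x y \<longleftrightarrow> E (g x) (g y)"
begin

lemma edge_image: "g \<in> G \<Longrightarrow> E x y \<Longrightarrow> E (g x) (g y)"
  using edge_preserving simple_graph_edge_in[OF simple] by blast

lemma quot_adj_sym: "quot_adj V E N B C \<Longrightarrow> quot_adj V E N C B"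
  unfolding quot_adj_def using simple_graph_sym[OF simple] by blast

lemma quot_adj_orbitsI:
  "E x y \<Longrightarrow> orbit N x \<noteq> orbit N y \<Longrightarrow> quot_adj V E N (orbit N x) (orbit N y)"
  unfolding quot_adj_def quot_vertices_def using simple_graph_edge_in[OF simple] orbit_refl by blast

lemma quot_adj_image:
  assumes g: "g \<in> G" and x: "x \<in> V" and y: "y \<in> V"
    and adj: "quot_adj V E N (orbit N x) (orbit N y)"
  shows "quot_adj V E N (orbit N (g x)) (orbit N (g y))"
proof -
  obtain x' y' where x': "x' \<in> orbit N x" and y': "y' \<in> orbit N y" and "E x' y'"
    and ne: "orbit N x \<noteq> orbit N y"
    using adj unfolding quot_adj_def by blast
  then have "E (g x') (g y')"
    using edge_image g by blast
  moreover have "g x' \<in> orbit N (g x)" "g y' \<in> orbit N (g y)"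
    using orbit_image g x y x' y' by blast+
  moreover have "orbit N (g x) \<noteq> orbit N (g y)"
    using orbit_image_eq_iff[OF g x y] ne by blast
  moreover have "g x \<in> V" "g y \<in> V"
    using G.element_image g x y by auto
  ultimately show ?thesis
    unfolding quot_adj_def quot_vertices_def by blast
qed

lemma quot_adj_lift_path:
  assumes "quot_adj V E N U Y" "quot_adj V E N Y W"
  obtains x y z where "U = orbit N x" "W = orbit N z" "E x y" "E y z"
proof -
  obtain x y where x: "x \<in> U" and y: "y \<in> Y" and xy: "E x y" and U: "U \<in> quot_vertices V N"
    and Y: "Y \<in> quot_vertices V N"
    using assms(1) unfolding quot_adj_def by blast
  obtain y' z where y': "y' \<in> Y" and z: "z \<in> W" and "E y' z" and W: "W \<in> quot_vertices V N"
    using assms(2) unfolding quot_adj_def by blast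
  obtain n where n: "n \<in> N" "y' = n y"
    using y' quot_vertex_eq_orbit[OF Y y] unfolding orbit_def by blast
  have "E (n x) y'"
    using edge_image[OF _ xy] n normal_subset by blast
  moreover have "U = orbit N (n x)"
    using quot_vertex_eq_orbit[OF U] x n(1) orbit_eq simple_graph_edge_in[OF simple xy]
    unfolding orbit_def by blast
  ultimately show ?thesis
    using that quot_vertex_eq_orbit[OF W z] \<open>E y' z\<close> by blast
qed

lemma mem_orbit_if_edge_in_orbit:
  assumes arc: "arc_transitive E G" and conn: "connected_graph V E"
    and xy: "E x y" "orbit N x = orbit N y" and u: "u \<in> V" and w: "w \<in> V"
  shows "w \<in> orbit N u"
proof -
  have y: "y \<in> orbit N x"
    using xy orbit_refl simple_graph_edge_in[OF simple] by blast
  have step_edge: "b \<in> orbit N a" if "E a b" for a b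
  proof -
    obtain g where g: "g \<in> G" "g x = a" "g y = b"
      using arc xy(1) \<open>E a b\<close> unfolding arc_transitive_def by blast
    have "x \<in> V"
      using simple_graph_edge_in[OF simple xy(1)] by blast
    then show ?thesis
      using orbit_image[OF g(1) _ y] g(2,3) by simp
  qed
  have "E\<^sup>*\<^sup>* u w"
    using connected_graph_rtranclp[OF conn u w] .
  then show ?thesis
  proof (induction rule: rtranclp_induct)
    case base
    then show ?case using orbit_refl[OF u] .
  next
    case (step v v')
    have "orbit N v = orbit N u"
      using orbit_eq[OF u step.IH] .
    then show ?case
      using step_edge[OF step(2)] by simp
  qed
qed

lemma quot_adj_closes_paths:
  assumes geo: "two_geodesic_transitive V E G" and girth: "4 \<le> girth E"
    and triangle: "is_cycle (quot_adj V E N) [A, B, C]"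
    and UY: "quot_adj V E N U Y" and YW: "quot_adj V E N Y W" and "U \<noteq> W"
  shows "quot_adj V E N U W"
proof -
  have "quot_adj V E N A B" "quot_adj V E N B C"
    using triangle by simp_all
  then obtain b c d where A: "A = orbit N b" and C: "C = orbit N d" and bcd: "E b c" "E c d"
    by (rule quot_adj_lift_path)
  have "A \<noteq> C"
    using triangle by simp
  then have geo_bcd: "two_geodesic E b c d"
    using two_geodesic_if_girth_ge_4[OF simple girth bcd] A C by blast
  have AC: "quot_adj V E N (orbit N b) (orbit N d)"
    using quot_adj_sym triangle A C by simp
  obtain x y z where U: "U = orbit N x" and W: "W = orbit N z" and xyz: "E x y" "E y z"
    by (rule quot_adj_lift_path[OF UY YW])
  then have "two_geodesic E x y z"
    using two_geodesic_if_girth_ge_4[OF simple girth xyz] \<open>U \<noteq> W\<close> by blast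
  then obtain g where g: "g \<in> G" "g b = x" "g d = z"
    using geo geo_bcd unfolding two_geodesic_transitive_def by blast
  have "b \<in> V" "d \<in> V"
    using simple_graph_edge_in[OF simple] bcd by blast+
  then show ?thesis
    using quot_adj_image[OF g(1) _ _ AC] g(2,3) U W by simp
qed

lemma complete_if_quot_paths_close:
  assumes conn: "connected_graph V E"
    and cross: "\<And>x y. E x y \<Longrightarrow> orbit N x \<noteq> orbit N y"
    and closes: "\<And>U Y W. quot_adj V E N U Y \<Longrightarrow> quot_adj V E N Y W \<Longrightarrow> U \<noteq> W
      \<Longrightarrow> quot_adj V E N U W"
  shows "complete_graph (quot_vertices V N) (quot_adj V E N)"
proof -
  have "orbit N u = orbit N w \<or> quot_adj V E N (orbit N u) (orbit N w)"
    if "u \<in> V" "w \<in> V" for u w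
    using connected_graph_rtranclp[OF conn that]
  proof (induction rule: rtranclp_induct)
    case (step v v')
    then have "quot_adj V E N (orbit N v) (orbit N v')"
      using quot_adj_orbitsI cross by blast
    with step.IH show ?case
      using closes by metis
  qed simp
  then show ?thesis
    unfolding complete_graph_def quot_vertices_def by blast
qed

end

theorem lemma3p3:
  fixes V :: "'v set" and E :: "'v \<Rightarrow> 'v \<Rightarrow> bool" and G N :: "('v \<Rightarrow> 'v) set"
  assumes "finite V"
    and "simple_graph V E"
    and "connected_graph V E"
    and "aut_group V E G"
    and "two_geodesic_transitive V E G"
    and "girth E \<ge> 4"
    and "N \<lhd> (BijGroup V)\<lparr>carrier := G\<rparr>"
    and "\<not> (\<forall>u\<in>V. \<forall>w\<in>V. \<exists>n\<in>N. n u = w)"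
    and "card (quot_vertices V N) \<ge> 3"
  shows "complete_graph (quot_vertices V N) (quot_adj V E N) \<longleftrightarrow> girth (quot_adj V E N) = 3"
proof -
  interpret normal_quotient_graph V G N E
    using assms(2,4,7) unfolding aut_group_def normal_quotient_graph_def
      normal_quotient_graph_axioms_def perm_normal_subgroup_def by blast
  have cross: "orbit N x \<noteq> orbit N y" if "E x y" for x y
    using mem_orbit_if_edge_in_orbit[OF two_geodesic_transitive_imp_arc_transitive[OF assms(5)]
        assms(3) that] assms(8)
    unfolding orbit_def by blast
  show ?thesis
  proof
    assume "complete_graph (quot_vertices V N) (quot_adj V E N)"
    then show "girth (quot_adj V E N) = 3"
      using complete_graph_girth_eq_3 assms(9) by blast
  next
    assume "girth (quot_adj V E N) = 3"
    then obtain A B C where "is_cycle (quot_adj V E N) [A, B, C]"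
      using girth_eq_3_iff_triangle[of "quot_adj V E N"] by blast
    then show "complete_graph (quot_vertices V N) (quot_adj V E N)"
      using complete_if_quot_paths_close[OF assms(3) cross]
        quot_adj_closes_paths[OF assms(5,6)] by blast
  qed
qed

end
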